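(* Let $S\subseteq[n]$ and $k\in S$. Suppose $\delta_i=0$ for $i\notin S$, and the vectors $\{\delta_j: j\in S\setminus\{k\}\}$ are random with a joint distribution $\mathcal{D}_k$ having finite first and second moments, while $\delta_k\in\mathbb{R}^n$ is deterministic. Let $(W',P')$ be the (random) stable point for $M'=M+\Delta$, where $\Delta e_i=\delta_i$. Then a vector $\delta_k\in\mathbb{R}^n$ maximizes agent $k$'s expected utility $\mathbb{E}_{\mathcal{D}_k}[g_k(W',P')]$ if and only if it solves the linear system $$T^{(k,k)}\delta_k+\sum_{j\in S,\ j\neq k}T^{(k,j)}\,\mathbb{E}_{\mathcal{D}_k}[\delta_j]=y_k .$$
   Context: Fix agents $[n]=\{1,\dots,n\}$. Let $\Sigma\in\mathbb{R}^{n\times n}$ be symmetric positive definite, $\Gamma=\mathrm{diag}(\gamma_1,\dots,\gamma_n)$ with all $\gamma_i>0$, and let $M\in\mathbb{R}^{n\times n}$ be the matrix of true beliefs with $i$-th column $\mu_i=Me_i$. For a matrix of reported negotiating positions $M'\in\mathbb{R}^{n\times n}$, the stable point for $M'$ is the unique pair $(W,P)$ of real $n\times n$ matrices with $W=W^T$, $P^T=-P$ and $M'-P=2\Sigma W\Gamma$; equivalently $\mathrm{vec}(W)=\tfrac12(\Gamma\otimes\Sigma+\Sigma\otimes\Gamma)^{-1}\mathrm{vec}(M'+M'^T)$ and $P=M'-2\Sigma W\Gamma$. Here $\mathrm{vec}$ stacks columns and $e_i$ is the $i$-th standard basis vector. Agent $i$'s (true) utility at $(W,P)$ is $g_i(W,P)=w_i^T(\mu_i-Pe_i)-\gamma_i\,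 w_i^T\Sigma w_i$, where $w_i=We_i$. Agent $i$'s negotiating position is $\mu_i'=\mu_i+\delta_i$. Matrices: $\Pi\in\mathbb{R}^{n^2\times n^2}$ is the commutation matrix, $\Pi\,\mathrm{vec}(X)=\mathrm{vec}(X^T)$ for all $X\in\mathbb{R}^{n\times n}$; $\Pi_k\in\mathbb{R}^{n\times n^2}$ satisfies $\Pi_k\mathrm{vec}(X)=Xe_k$. For $Z\in\mathbb{R}^{n^2\times n^2}$, $Z^{(p,q)}$ is its $n\times n$ block in block-row $p$ and block-column $q$. Set $K=\Gamma\otimes\Sigma+\Sigma\otimes\Gamma$ (invertible), $L=\tfrac12(K^{-1}+K^{-1}\Pi)$, $T^{(k,k)}=L^{(k,k)}+(L^{(k,k)})^T-2\gamma_k(L^{(k,k)})^T\Sigma L^{(k,k)}$, $T^{(k,j)}=(I-2\gamma_k(L^{(k,k)})^T\Sigma)L^{(k,j)}$ for $j\neq k$, and $y_k=\tfrac12\big(2\gamma_k(L^{(k,k)})^T\Sigma-I\big)\Pi_kK^{-1}\mathrm{vec}(M+M^T)$. *)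

theory Defs
  imports "HOL-Analysis.Analysis" "HOL-Probability.Probability"
begin

text \<open>Agents are indexed by a finite type 'n (so n = CARD('n)); n x n matrices are
  real^'n^'n; vectors in R^(n^2) are indexed by pairs 'n \<times> 'n, where the pair (i,p)
  stands for row i of column p (column stacking).\<close>

definition diagm :: "('n::finite \<Rightarrow> real) \<Rightarrow> real^'n^'n" where
  "diagm g = (\<chi> i j. if i = j then g i else 0)"

definition vecm :: "real^'n^'n \<Rightarrow> real^('n::finite \<times> 'n)" where
  "vecm X = (\<chi> ip. X $ fst ip $ snd ip)"

text \<open>Kronecker product: block (p,q) of A \<otimes> B is A(p,q) B.\<close>
definition kron :: "real^'n^'n \<Rightarrow> real^'n^'n \<Rightarrow> real^('n::finite \<times> 'n)^('n \<times> 'n)" where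
  "kron A B = (\<chi> ip jq. A $ snd ip $ snd jq * B $ fst ip $ fst jq)"

text \<open>Commutation matrix: Pi *v vecm X = vecm (transpose X).\<close>
definition commut :: "real^('n::finite \<times> 'n)^('n \<times> 'n)" where
  "commut = (\<chi> ip jq. if fst ip = snd jq \<and> snd ip = fst jq then 1 else 0)"

text \<open>Pi_k: Pi_k *v vecm X = column k X (= X e_k).\<close>
definition commut_k :: "'n \<Rightarrow> real^('n::finite \<times> 'n)^'n" where
  "commut_k k = (\<chi> i jq. if jq = (i, k) then 1 else 0)"

definition blk :: "real^('n::finite \<times> 'n)^('n \<times> 'n) \<Rightarrow> 'n \<Rightarrow> 'n \<Rightarrow> real^'n^'n" where
  "blk Z p q = (\<chi> i j. Z $ (i, p) $ (j, q))"

definition Kmat :: "real^'n^'n \<Rightarrow> ('n::finite \<Rightarrow> real) \<Rightarrow> real^('n \<times> 'n)^('n \<times> 'n)" where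
  "Kmat \<Sigma> \<gamma> = kron (diagm \<gamma>) \<Sigma> + kron \<Sigma> (diagm \<gamma>)"

definition Lmat :: "real^'n^'n \<Rightarrow> ('n::finite \<Rightarrow> real) \<Rightarrow> real^('n \<times> 'n)^('n \<times> 'n)" where
  "Lmat \<Sigma> \<gamma> = (1/2) *\<^sub>R (matrix_inv (Kmat \<Sigma> \<gamma>) + matrix_inv (Kmat \<Sigma> \<gamma>) ** commut)"

definition Tblk :: "real^'n^'n \<Rightarrow> ('n::finite \<Rightarrow> real) \<Rightarrow> 'n \<Rightarrow> 'n \<Rightarrow> real^'n^'n" where
  "Tblk \<Sigma> \<gamma> k j =
     (let Lkk = blk (Lmat \<Sigma> \<gamma>) k k in
      if j = k then Lkk + transpose Lkk - (2 * \<gamma> k) *\<^sub>R (transpose Lkk ** \<Sigma> ** Lkk)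
      else (mat 1 - (2 * \<gamma> k) *\<^sub>R (transpose Lkk ** \<Sigma>)) ** blk (Lmat \<Sigma> \<gamma>) k j)"

definition yvec :: "real^'n^'n \<Rightarrow> ('n::finite \<Rightarrow> real) \<Rightarrow> real^'n^'n \<Rightarrow> 'n \<Rightarrow> real^'n" where
  "yvec \<Sigma> \<gamma> M k =
     (let Lkk = blk (Lmat \<Sigma> \<gamma>) k k in
      (1/2) *\<^sub>R (((2 * \<gamma> k) *\<^sub>R (transpose Lkk ** \<Sigma>) - mat 1)
        *v (commut_k k *v (matrix_inv (Kmat \<Sigma> \<gamma>) *v vecm (M + transpose M)))))"

definition stable_point :: "real^'n^'n \<Rightarrow> ('n::finite \<Rightarrow> real) \<Rightarrow> real^'n^'n
    \<Rightarrow> (real^'n^'n) \<times> (real^'n^'n)" where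
  "stable_point \<Sigma> \<gamma> M' = (THE (W, P). transpose W = W \<and> transpose P = - P \<and>
      M' - P = 2 *\<^sub>R (\<Sigma> ** W ** diagm \<gamma>))"

definition utility :: "real^'n^'n \<Rightarrow> ('n::finite \<Rightarrow> real) \<Rightarrow> real^'n^'n \<Rightarrow> 'n
    \<Rightarrow> (real^'n^'n) \<times> (real^'n^'n) \<Rightarrow> real" where
  "utility \<Sigma> \<gamma> M i WP = (let W = fst WP; P = snd WP; w = column i W in
      w \<bullet> (column i M - column i P) - \<gamma> i * (w \<bullet> (\<Sigma> *v w)))"

definition devmat :: "'n set \<Rightarrow> 'n \<Rightarrow> ('n \<Rightarrow> 'a \<Rightarrow> real^'n) \<Rightarrow> real^'n \<Rightarrow> 'a
    \<Rightarrow> real^'n^('n::finite)" where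
  "devmat S k D d \<omega> = (\<chi> r i. if i = k then d $ r else if i \<in> S then D i \<omega> $ r else 0)"

definition expected_utility :: "'a measure \<Rightarrow> real^'n^'n \<Rightarrow> ('n::finite \<Rightarrow> real)
    \<Rightarrow> real^'n^'n \<Rightarrow> 'n set \<Rightarrow> 'n \<Rightarrow> ('n \<Rightarrow> 'a \<Rightarrow> real^'n) \<Rightarrow> real^'n \<Rightarrow> real" where
  "expected_utility \<Omega> \<Sigma> \<gamma> M S k D d =
     integral\<^sup>L \<Omega> (\<lambda>\<omega>. utility \<Sigma> \<gamma> M k (stable_point \<Sigma> \<gamma> (M + devmat S k D d \<omega>)))"

end

theory Submission
  imports Defs
begin

text \<open>
  The stable point depends linearly on the reported positions: \<open>vec W = L vec M'\<close> and
  \<open>P = M' - 2 \<Sigma> W \<Gamma>\<close>.  Hence agent \<open>k\<close>'s weight vector \<open>w\<^sub>k\<close> is affine in all deviations, with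
  slope \<open>blk L k k\<close> in its own deviation, and its utility is a quadratic function of its own
  deviation whose quadratic part is deterministic and whose linear part depends on the other
  agents' deviations only through their means.  So the expected utility has the form
  \<open>C + b \<bullet> d - d \<bullet> N d\<close>.  The form \<open>N\<close> is positive semidefinite: if \<open>W\<close> is the stable weight
  matrix for the report \<open>x e\<^sub>k\<^sup>T\<close>, then pairing \<open>W\<close> with \<open>\<Sigma> W \<Gamma> + \<Gamma> W \<Sigma>\<close> gives
  \<open>w\<^sub>k \<bullet> x = 2 (\<Sum>j. \<gamma>\<^sub>j w\<^sub>j \<bullet> \<Sigma> w\<^sub>j)\<close>.  A concave quadratic is maximal exactly where its gradient
  \<open>b - (N + N\<^sup>T) d\<close> vanishes, and this is the linear system.
\<close>

section \<open>Matrix identities and vectorisation\<close>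

lemma if_zero_times: "(if P then a else 0) * (b::real) = (if P then a * b else 0)"
  by simp

lemma times_if_zero: "(b::real) * (if P then a else 0) = (if P then b * a else 0)"
  by simp

lemma if_conj_zero: "(if P \<and> Q then (x::real) else 0) = (if P then if Q then x else 0 else 0)"
  by simp

lemma matrix_mul_entry: "((A::real^'n::finite^'m) ** (B::real^'p^'n)) $ i $ j = (\<Sum>l\<in>UNIV. A$i$l * B$l$j)"
  by (simp add: matrix_matrix_mult_def)

lemma matrix_vector_mul_entry: "((A::real^'n::finite^'m) *v x) $ i = (\<Sum>l\<in>UNIV. A$i$l * x$l)"
  by (simp add: matrix_vector_mult_def)

lemma diagm_entry: "diagm g $ i $ j = (if i = j then g i else 0)"
  by (simp add: diagm_def)

lemma matrix_mul_diagm_entry: "((X::real^'n::finite^'n) ** diagm g) $ i $ j = X$i$j * g j"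
  by (simp add: matrix_mul_entry diagm_entry times_if_zero)

lemma sum_UNIV_pairs: "(\<Sum>ip\<in>UNIV. f ip) = (\<Sum>i\<in>UNIV. \<Sum>p\<in>UNIV. f (i, p))"
  by (simp add: UNIV_Times_UNIV[symmetric] sum.cartesian_product del: UNIV_Times_UNIV)

lemma matrix_vector_mul_sum: "(B::real^'n::finite^'m) *v (\<Sum>i\<in>I. f i) = (\<Sum>i\<in>I. B *v f i)"
  by (simp add: linear_sum[OF matrix_vector_mul_linear] o_def)

lemma matrix_vector_mult_uminus: "(- A) *v x = - ((A::real^'n::finite^'m) *v x)"
  by (simp add: vec_eq_iff matrix_vector_mult_def sum_negf)

lemma column_matrix_mul: "column j ((A::real^'n::finite^'m) ** (B::real^'p^'n)) = A *v column j B"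
  by (simp add: vec_eq_iff column_def matrix_mul_entry matrix_vector_mul_entry)

lemma column_matrix_mul_diagm: "column j ((X::real^'n::finite^'n) ** diagm g) = g j *\<^sub>R column j X"
  by (simp add: vec_eq_iff column_def matrix_mul_diagm_entry)

lemma column_linear:
  "column j (X + Y) = column j X + column j (Y::real^'n::finite^'m)"
  "column j (X - Y) = column j X - column j Y"
  "column j (c *\<^sub>R X) = c *\<^sub>R column j X"
  by (simp_all add: vec_eq_iff column_def)

lemma transpose_diagm [simp]: "transpose (diagm g) = diagm g"
  by (simp add: vec_eq_iff transpose_def diagm_entry)

lemma transpose_add: "transpose (A + B) = transpose A + transpose (B::real^'n::finite^'m::finite)"
  by (simp add: vec_eq_iff transpose_def)

lemma transpose_diff: "transpose (A - B) = transpose A - transpose (B::real^'n::finite^'m::finite)"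
  by (simp add: vec_eq_iff transpose_def)

lemma inner_vector_matrix_mul: "x \<bullet> (y v* A) = y \<bullet> ((A::real^'n::finite^'m::finite) *v x)"
  by (metis dot_lmul_matrix inner_commute)

lemma inner_symmetric_matrix_commute:
  assumes "transpose S = (S::real^'n::finite^'n)"
  shows "x \<bullet> (S *v y) = y \<bullet> (S *v x)"
  by (metis assms dot_lmul_matrix inner_commute transpose_matrix_vector)

lemma vecm_entry: "vecm X $ (i, p) = X $ i $ p"
  by (simp add: vecm_def)

definition unvecm :: "real^('n::finite \<times> 'n) \<Rightarrow> real^'n^'n" where
  "unvecm v = (\<chi> i p. v $ (i, p))"

lemma vecm_unvecm [simp]: "vecm (unvecm v) = v"
  by (simp add: vecm_def unvecm_def vec_eq_iff)

lemma vecm_inject: "vecm X = vecm Y \<longleftrightarrow> X = Y"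
  by (metis vecm_entry vec_eq_iff)

lemma vecm_linear:
  "vecm 0 = 0" "vecm (X + Y) = vecm X + vecm Y" "vecm (X - Y) = vecm X - vecm Y"
  "vecm (c *\<^sub>R X) = c *\<^sub>R vecm X"
  by (simp_all add: vecm_def vec_eq_iff)

lemma inner_vecm: "vecm X \<bullet> vecm Y = (\<Sum>p\<in>UNIV. column p X \<bullet> column p Y)"
proof -
  have "vecm X \<bullet> vecm Y = (\<Sum>i\<in>UNIV. \<Sum>p\<in>UNIV. X$i$p * Y$i$p)"
    by (simp add: inner_vec_def sum_UNIV_pairs vecm_entry)
  also have "\<dots> = (\<Sum>p\<in>UNIV. \<Sum>i\<in>UNIV. X$i$p * Y$i$p)"
    by (rule sum.swap)
  finally show ?thesis
    by (simp add: inner_vec_def column_def)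
qed

lemma inner_vecm_transpose: "vecm (transpose X) \<bullet> vecm (transpose Y) = vecm X \<bullet> vecm Y"
  by (simp add: inner_vec_def sum_UNIV_pairs vecm_entry transpose_def) (rule sum.swap)

lemma kron_vecm: "kron A B *v vecm X = vecm (B ** X ** transpose A)"
proof -
  have "(kron A B *v vecm X) $ (i, p) = vecm (B ** X ** transpose A) $ (i, p)" for i p
  proof -
    have "(kron A B *v vecm X) $ (i, p) = (\<Sum>j\<in>UNIV. \<Sum>q\<in>UNIV. A$p$q * B$i$j * X$j$q)"
      by (simp add: matrix_vector_mul_entry sum_UNIV_pairs kron_def vecm_entry)
    also have "\<dots> = (\<Sum>q\<in>UNIV. \<Sum>j\<in>UNIV. A$p$q * B$i$j * X$j$q)"
      by (rule sum.swap)
    finally show ?thesis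
      by (simp add: vecm_entry matrix_mul_entry transpose_def sum_distrib_left mult_ac)
  qed
  then show ?thesis
    by (simp add: vec_eq_iff)
qed

lemma commut_vecm: "commut *v vecm X = vecm (transpose X)"
  by (simp add: vec_eq_iff matrix_vector_mul_entry sum_UNIV_pairs commut_def vecm_entry
      transpose_def if_zero_times if_conj_zero)

lemma commut_k_mult: "commut_k k *v v = (\<chi> i. v $ (i, k))"
  by (simp add: vec_eq_iff matrix_vector_mul_entry commut_k_def if_zero_times)

lemma commut_k_vecm: "commut_k k *v vecm X = column k X"
  by (simp add: commut_k_mult column_def vecm_entry)

lemma commut_k_block_expansion: "commut_k k *v (Z *v vecm X) = (\<Sum>q\<in>UNIV. blk Z k q *v column q X)"
proof -
  have "(Z *v vecm X) $ (i, k) = (\<Sum>q\<in>UNIV. (blk Z k q *v column q X) $ i)" for i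
  proof -
    have "(Z *v vecm X) $ (i, k) = (\<Sum>j\<in>UNIV. \<Sum>q\<in>UNIV. Z$(i,k)$(j,q) * X$j$q)"
      by (simp add: matrix_vector_mul_entry sum_UNIV_pairs vecm_entry)
    also have "\<dots> = (\<Sum>q\<in>UNIV. \<Sum>j\<in>UNIV. Z$(i,k)$(j,q) * X$j$q)"
      by (rule sum.swap)
    finally show ?thesis
      by (simp add: matrix_vector_mul_entry blk_def column_def)
  qed
  then show ?thesis
    by (simp add: commut_k_mult vec_eq_iff)
qed

section \<open>Maximising a concave quadratic\<close>

lemma psd_quadratic_maximum_iff:
  fixes N :: "real^'n::finite^'n"
  assumes psd: "\<And>x. 0 \<le> x \<bullet> (N *v x)"
  shows "(\<forall>d'. b \<bullet> d' - d' \<bullet> (N *v d') \<le> b \<bullet> d - d \<bullet> (N *v d)) \<longleftrightarrow> (N + transpose N) *v d = b"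
proof -
  define Q where "Q x = x \<bullet> (N *v x)" for x
  have Q_add: "Q (d + h) = Q d + Q h + ((N + transpose N) *v d) \<bullet> h" for h
    by (simp add: Q_def matrix_vector_right_distrib matrix_vector_mult_add_rdistrib inner_add_left
        inner_add_right dot_lmul_matrix inner_commute[of h])
  have Q_scale: "Q (t *\<^sub>R v) = t\<^sup>2 * Q v" for t v
    by (simp add: Q_def matrix_vector_mult_scaleR power2_eq_square)
  show ?thesis
    unfolding Q_def[symmetric]
  proof
    assume max: "\<forall>d'. b \<bullet> d' - Q d' \<le> b \<bullet> d - Q d"
    show "(N + transpose N) *v d = b"
    proof (rule ccontr)
      assume "(N + transpose N) *v d \<noteq> b"
      define v where "v = b - (N + transpose N) *v d"
      have "0 < v \<bullet> v"
        using \<open>(N + transpose N) *v d \<noteq> b\<close> by (simp add: v_def)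
      have "0 \<le> Q v"
        using psd by (simp add: Q_def)
      text \<open>A small step \<open>t\<close> along the residual \<open>v\<close> gains \<open>t (v \<bullet> v)\<close> at cost \<open>t\<^sup>2 Q v\<close>.\<close>
      define t where "t = (v \<bullet> v) / (Q v + 1)"
      have "0 < t"
        using \<open>0 < v \<bullet> v\<close> \<open>0 \<le> Q v\<close> by (simp add: t_def)
      have "t * Q v < v \<bullet> v"
        using \<open>0 < v \<bullet> v\<close> \<open>0 \<le> Q v\<close> by (simp add: t_def field_simps)
      then have gain: "0 < t * (v \<bullet> v) - t\<^sup>2 * Q v"
        using \<open>0 < t\<close> mult_pos_pos[of t "v \<bullet> v - t * Q v"] by (simp add: power2_eq_square algebra_simps)
      have "b \<bullet> (d + t *\<^sub>R v) - Q (d + t *\<^sub>R v) = b \<bullet> d - Q d + (t * (v \<bullet> v) - t\<^sup>2 * Q v)"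
        using Q_add[of "t *\<^sub>R v"] Q_scale[of t v]
        by (simp add: v_def algebra_simps)
      with gain max[rule_format, of "d + t *\<^sub>R v"] show False by linarith
    qed
  next
    assume "(N + transpose N) *v d = b"
    show "\<forall>d'. b \<bullet> d' - Q d' \<le> b \<bullet> d - Q d"
    proof
      fix d'
      have "Q d' = Q d + Q (d' - d) + b \<bullet> (d' - d)"
        using Q_add[of "d' - d"] \<open>(N + transpose N) *v d = b\<close> by simp
      moreover have "0 \<le> Q (d' - d)"
        using psd by (simp add: Q_def)
      ultimately show "b \<bullet> d' - Q d' \<le> b \<bullet> d - Q d"
        by (simp add: inner_diff_right)
    qed
  qed
qed

section \<open>Square-integrable random vectors\<close>

definition square_integrable :: "'a measure \<Rightarrow> ('a \<Rightarrow> 'b::real_normed_vector) \<Rightarrow> bool" where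
  "square_integrable M f \<longleftrightarrow> f \<in> borel_measurable M \<and> integrable M (\<lambda>x. (norm (f x))\<^sup>2)"

lemma square_integrable_dominated:
  fixes f :: "'a \<Rightarrow> 'b::real_normed_vector"
  assumes "f \<in> borel_measurable M" "integrable M g" "\<And>x. (norm (f x))\<^sup>2 \<le> g x"
  shows "square_integrable M f"
  unfolding square_integrable_def
proof
  show "f \<in> borel_measurable M"
    by (fact assms(1))
  show "integrable M (\<lambda>x. (norm (f x))\<^sup>2)"
  proof (rule Bochner_Integration.integrable_bound[OF assms(2)])
    show "(\<lambda>x. (norm (f x))\<^sup>2) \<in> borel_measurable M"
      using assms(1) by measurable
    show "AE x in M. norm ((norm (f x))\<^sup>2) \<le> norm (g x)"
      using assms(3) by (intro AE_I2) (simp add: order_trans[OF assms(3) abs_ge_self])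
  qed
qed

lemma square_integrable_add:
  fixes f g :: "'a \<Rightarrow> 'b::{real_normed_vector, second_countable_topology}"
  assumes f: "square_integrable M f" and g: "square_integrable M g"
  shows "square_integrable M (\<lambda>x. f x + g x)"
proof (rule square_integrable_dominated)
  show "(\<lambda>x. f x + g x) \<in> borel_measurable M"
    using f g unfolding square_integrable_def by (intro borel_measurable_add) auto
  show "integrable M (\<lambda>x. 2 * (norm (f x))\<^sup>2 + 2 * (norm (g x))\<^sup>2)"
    using f g by (simp add: square_integrable_def)
  fix x
  have "(norm (f x + g x))\<^sup>2 \<le> (norm (f x) + norm (g x))\<^sup>2"
    by (simp add: norm_triangle_ineq power_mono)
  also have "\<dots> \<le> 2 * (norm (f x))\<^sup>2 + 2 * (norm (g x))\<^sup>2"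
    using sum_squares_bound[of "norm (f x)" "norm (g x)"] by (simp add: power2_sum)
  finally show "(norm (f x + g x))\<^sup>2 \<le> 2 * (norm (f x))\<^sup>2 + 2 * (norm (g x))\<^sup>2" .
qed

lemma square_integrable_const: "finite_measure M \<Longrightarrow> square_integrable M (\<lambda>_. c)"
  by (simp add: square_integrable_def finite_measure.integrable_const)

lemma square_integrable_sum:
  fixes f :: "'i \<Rightarrow> 'a \<Rightarrow> 'b::{real_normed_vector, second_countable_topology}"
  assumes "finite_measure M" "\<And>i. i \<in> I \<Longrightarrow> square_integrable M (f i)"
  shows "square_integrable M (\<lambda>x. \<Sum>i\<in>I. f i x)"
  using assms(2)
proof (induction I rule: infinite_finite_induct)
  case (infinite I)
  then show ?case using square_integrable_const[OF assms(1)] by simp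
next
  case empty
  then show ?case using square_integrable_const[OF assms(1)] by simp
next
  case (insert i I)
  then show ?case by (simp add: square_integrable_add)
qed

lemma square_integrable_bounded_linear:
  assumes h: "bounded_linear h" and f: "square_integrable M f"
  shows "square_integrable M (\<lambda>x. h (f x))"
proof -
  obtain K where K: "\<And>y. norm (h y) \<le> norm y * K"
    using bounded_linear.bounded[OF h] by blast
  show ?thesis
  proof (rule square_integrable_dominated)
    show "(\<lambda>x. h (f x)) \<in> borel_measurable M"
      using f unfolding square_integrable_def
      by (auto intro: borel_measurable_continuous_on[OF linear_continuous_on[OF h]])
    show "integrable M (\<lambda>x. (norm (f x))\<^sup>2 * K\<^sup>2)"
      using f by (simp add: square_integrable_def)
    show "(norm (h (f x)))\<^sup>2 \<le> (norm (f x))\<^sup>2 * K\<^sup>2" for x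
      using power_mono[OF K[of "f x"] norm_ge_zero, of 2] by (simp add: power_mult_distrib)
  qed
qed

lemma integrable_inner_square_integrable:
  fixes f g :: "'a \<Rightarrow> 'b::{real_inner, second_countable_topology}"
  assumes f: "square_integrable M f" and g: "square_integrable M g"
  shows "integrable M (\<lambda>x. f x \<bullet> g x)"
proof (rule Bochner_Integration.integrable_bound[of _ "\<lambda>x. (norm (f x))\<^sup>2 + (norm (g x))\<^sup>2"])
  show "integrable M (\<lambda>x. (norm (f x))\<^sup>2 + (norm (g x))\<^sup>2)"
    using f g by (simp add: square_integrable_def)
  show "(\<lambda>x. f x \<bullet> g x) \<in> borel_measurable M"
    using f g unfolding square_integrable_def by (intro borel_measurable_inner) auto
  have bound: "norm (f x \<bullet> g x) \<le> norm ((norm (f x))\<^sup>2 + (norm (g x))\<^sup>2)" for x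
  proof -
    have "\<bar>f x \<bullet> g x\<bar> \<le> norm (f x) * norm (g x)"
      by (rule Cauchy_Schwarz_ineq2)
    also have "\<dots> \<le> (norm (f x))\<^sup>2 + (norm (g x))\<^sup>2"
      using sum_squares_bound[of "norm (f x)" "norm (g x)"]
        mult_nonneg_nonneg[OF norm_ge_zero norm_ge_zero, of "f x" "g x"]
      unfolding mult.assoc by linarith
    finally show ?thesis
      by simp
  qed
  show "AE x in M. norm (f x \<bullet> g x) \<le> norm ((norm (f x))\<^sup>2 + (norm (g x))\<^sup>2)"
    by (rule AE_I2) (rule bound)
qed

lemma (in prob_space) expectation_shifted_quadratic:
  fixes a :: "'a \<Rightarrow> real^'n::finite" and \<Sigma> :: "real^'n^'n"
  assumes "transpose \<Sigma> = \<Sigma>" "integrable M a" "square_integrable M a"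
  shows "(\<integral>\<omega>. c * ((a \<omega> + v) \<bullet> (\<Sigma> *v (a \<omega> + v))) - (a \<omega> + v) \<bullet> d \<partial>M) =
    (\<integral>\<omega>. c * (a \<omega> \<bullet> (\<Sigma> *v a \<omega>)) \<partial>M) + integral\<^sup>L M a \<bullet> ((2 * c) *\<^sub>R (\<Sigma> *v v) - d)
      + (c * (v \<bullet> (\<Sigma> *v v)) - v \<bullet> d)"
proof -
  have expand: "c * ((a \<omega> + v) \<bullet> (\<Sigma> *v (a \<omega> + v))) - (a \<omega> + v) \<bullet> d =
      c * (a \<omega> \<bullet> (\<Sigma> *v a \<omega>)) + a \<omega> \<bullet> ((2 * c) *\<^sub>R (\<Sigma> *v v) - d) + (c * (v \<bullet> (\<Sigma> *v v)) - v \<bullet> d)" for \<omega>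
    using inner_symmetric_matrix_commute[OF assms(1), of v "a \<omega>"]
    by (simp add: matrix_vector_right_distrib inner_add_left inner_add_right inner_diff_right algebra_simps)
  have "square_integrable M (\<lambda>\<omega>. \<Sigma> *v a \<omega>)"
    by (rule square_integrable_bounded_linear[OF matrix_vector_mul_bounded_linear assms(3)])
  then have "integrable M (\<lambda>\<omega>. a \<omega> \<bullet> (\<Sigma> *v a \<omega>))"
    by (rule integrable_inner_square_integrable[OF assms(3)])
  then show ?thesis
    using assms(2) by (simp add: expand prob_space)
qed

lemma (in prob_space) affine_random_vector_moments:
  fixes D :: "'i \<Rightarrow> 'a \<Rightarrow> real^'n::finite" and L :: "'i \<Rightarrow> real^'n^'m::finite"
  assumes integrable: "\<And>j. j \<in> J \<Longrightarrow> integrable M (D j)"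
    and square_integrable: "\<And>j. j \<in> J \<Longrightarrow> integrable M (\<lambda>\<omega>. (norm (D j \<omega>))\<^sup>2)"
  shows "integrable M (\<lambda>\<omega>. c + (\<Sum>j\<in>J. L j *v D j \<omega>))"
    and "square_integrable M (\<lambda>\<omega>. c + (\<Sum>j\<in>J. L j *v D j \<omega>))"
    and "(\<integral>\<omega>. c + (\<Sum>j\<in>J. L j *v D j \<omega>) \<partial>M) = c + (\<Sum>j\<in>J. L j *v integral\<^sup>L M (D j))"
proof -
  have integrable_LD: "integrable M (\<lambda>\<omega>. L j *v D j \<omega>)" if "j \<in> J" for j
    by (rule integrable_bounded_linear[OF matrix_vector_mul_bounded_linear integrable[OF that]])
  have integrable_sum: "integrable M (\<lambda>\<omega>. \<Sum>j\<in>J. L j *v D j \<omega>)"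
    by (intro Bochner_Integration.integrable_sum integrable_LD)
  then show "integrable M (\<lambda>\<omega>. c + (\<Sum>j\<in>J. L j *v D j \<omega>))"
    by simp
  show "square_integrable M (\<lambda>\<omega>. c + (\<Sum>j\<in>J. L j *v D j \<omega>))"
  proof (intro square_integrable_add square_integrable_sum)
    show "square_integrable M (\<lambda>_. c)"
      by (rule square_integrable_const[OF finite_measure])
    show "square_integrable M (\<lambda>\<omega>. L j *v D j \<omega>)" if "j \<in> J" for j
    proof (rule square_integrable_bounded_linear[OF matrix_vector_mul_bounded_linear])
      show "square_integrable M (D j)"
        using integrable[OF that] square_integrable[OF that]
        by (simp add: square_integrable_def borel_measurable_integrable)
    qed
  qed (rule finite_measure)
  have "(\<integral>\<omega>. c + (\<Sum>j\<in>J. L j *v D j \<omega>) \<partial>M) = c + (\<Sum>j\<in>J. \<integral>\<omega>. L j *v D j \<omega> \<partial>M)"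
    using integrable_sum integrable_LD
    by (simp add: Bochner_Integration.integral_add Bochner_Integration.integral_sum prob_space)
  also have "\<dots> = c + (\<Sum>j\<in>J. L j *v integral\<^sup>L M (D j))"
    using integrable by (simp add: integral_bounded_linear[OF matrix_vector_mul_bounded_linear])
  finally show "(\<integral>\<omega>. c + (\<Sum>j\<in>J. L j *v D j \<omega>) \<partial>M) = c + (\<Sum>j\<in>J. L j *v integral\<^sup>L M (D j))" .
qed

text \<open>
  If \<open>w\<close> is agent \<open>k\<close>'s expected weight vector when it reports truthfully, its expected utility
  after deviating by \<open>d\<close> is \<open>C + (gain_matrix \<Sigma> \<gamma> k *v w) \<bullet> d - d \<bullet> (own_cost \<Sigma> \<gamma> k *v d)\<close>.
\<close>

definition own_cost :: "real^'n^'n \<Rightarrow> ('n::finite \<Rightarrow> real) \<Rightarrow> 'n \<Rightarrow> real^'n^'n" where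
  "own_cost \<Sigma> \<gamma> k = (let A = blk (Lmat \<Sigma> \<gamma>) k k in A - \<gamma> k *\<^sub>R (transpose A ** \<Sigma> ** A))"

definition gain_matrix :: "real^'n^'n \<Rightarrow> ('n::finite \<Rightarrow> real) \<Rightarrow> 'n \<Rightarrow> real^'n^'n" where
  "gain_matrix \<Sigma> \<gamma> k = (2 * \<gamma> k) *\<^sub>R (transpose (blk (Lmat \<Sigma> \<gamma>) k k) ** \<Sigma>) - mat 1"

lemma Tblk_diag:
  assumes "transpose \<Sigma> = \<Sigma>"
  shows "Tblk \<Sigma> \<gamma> k k = own_cost \<Sigma> \<gamma> k + transpose (own_cost \<Sigma> \<gamma> k)"
  by (simp add: Tblk_def own_cost_def Let_def transpose_diff transpose_scalar matrix_transpose_mul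
      assms matrix_mul_assoc vec_eq_iff algebra_simps)

lemma Tblk_off_diag: "j \<noteq> k \<Longrightarrow> Tblk \<Sigma> \<gamma> k j = - (gain_matrix \<Sigma> \<gamma> k ** blk (Lmat \<Sigma> \<gamma>) k j)"
  by (simp add: Tblk_def gain_matrix_def Let_def vec_eq_iff matrix_mul_entry sum_subtractf
      algebra_simps)

lemma inner_own_cost:
  "x \<bullet> (own_cost \<Sigma> \<gamma> k *v x) =
     x \<bullet> (blk (Lmat \<Sigma> \<gamma>) k k *v x) - \<gamma> k * ((blk (Lmat \<Sigma> \<gamma>) k k *v x) \<bullet> (\<Sigma> *v (blk (Lmat \<Sigma> \<gamma>) k k *v x)))"
  by (simp add: own_cost_def Let_def matrix_vector_mult_diff_rdistrib scaleR_matrix_vector_assoc[symmetric]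
      matrix_vector_mul_assoc[symmetric] inner_diff_right inner_vector_matrix_mul inner_commute[of "\<Sigma> *v _"])

lemma inner_gain_matrix:
  assumes "transpose \<Sigma> = \<Sigma>"
  shows "(gain_matrix \<Sigma> \<gamma> k *v m) \<bullet> d = m \<bullet> ((2 * \<gamma> k) *\<^sub>R (\<Sigma> *v (blk (Lmat \<Sigma> \<gamma>) k k *v d)) - d)"
  using inner_symmetric_matrix_commute[OF assms, of m]
  by (simp add: gain_matrix_def matrix_vector_mult_diff_rdistrib scaleR_matrix_vector_assoc[symmetric]
      matrix_vector_mul_assoc[symmetric] inner_diff_left inner_diff_right inner_vector_matrix_mul
      inner_commute[of _ d] inner_commute[of "\<Sigma> *v m"])

lemma column_devmat:
  "column q (devmat S k D d \<omega>) = (if q = k then d else if q \<in> S then D q \<omega> else 0)"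
  by (simp add: devmat_def column_def vec_eq_iff)

section \<open>The stable point\<close>

locale negotiation_model =
  fixes \<Sigma> :: "real^'n::finite^'n" and \<gamma> :: "'n \<Rightarrow> real"
  assumes symmetric: "transpose \<Sigma> = \<Sigma>"
    and positive_definite: "\<And>x. x \<noteq> 0 \<Longrightarrow> 0 < x \<bullet> (\<Sigma> *v x)"
    and risk_aversion_pos: "\<And>i. 0 < \<gamma> i"
begin

lemma quadratic_form_nonneg: "0 \<le> x \<bullet> (\<Sigma> *v x)"
  using positive_definite[of x] by (cases "x = 0") auto

definition sylvester :: "real^'n^'n \<Rightarrow> real^'n^'n" where
  "sylvester X = \<Sigma> ** X ** diagm \<gamma> + diagm \<gamma> ** X ** \<Sigma>"

lemma transpose_sylvester: "transpose (sylvester X) = sylvester (transpose X)"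
  by (simp add: sylvester_def transpose_add matrix_transpose_mul symmetric matrix_mul_assoc add.commute)

lemma Kmat_vecm: "Kmat \<Sigma> \<gamma> *v vecm X = vecm (sylvester X)"
  by (simp add: Kmat_def matrix_vector_mult_add_rdistrib kron_vecm symmetric sylvester_def vecm_linear)

lemma inner_vecm_sigma_gamma:
  "vecm X \<bullet> vecm (\<Sigma> ** X ** diagm \<gamma>) = (\<Sum>p\<in>UNIV. \<gamma> p * (column p X \<bullet> (\<Sigma> *v column p X)))"
  by (simp add: inner_vecm column_matrix_mul_diagm column_matrix_mul[of _ \<Sigma> X])

lemma inner_vecm_sylvester:
  "vecm X \<bullet> vecm (sylvester X) =
     (\<Sum>p\<in>UNIV. \<gamma> p * (column p X \<bullet> (\<Sigma> *v column p X))) + (\<Sum>i\<in>UNIV. \<gamma> i * (row i X \<bullet> (\<Sigma> *v row i X)))"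
proof -
  have "vecm X \<bullet> vecm (diagm \<gamma> ** X ** \<Sigma>) = vecm (transpose X) \<bullet> vecm (\<Sigma> ** transpose X ** diagm \<gamma>)"
    using inner_vecm_transpose[of X "diagm \<gamma> ** X ** \<Sigma>"]
    by (simp add: matrix_transpose_mul symmetric matrix_mul_assoc)
  then show ?thesis
    by (simp add: sylvester_def vecm_linear inner_add_right inner_vecm_sigma_gamma)
qed

lemma sylvester_eq_0D: "sylvester X = 0 \<Longrightarrow> X = 0"
proof -
  assume "sylvester X = 0"
  let ?c = "\<lambda>p. \<gamma> p * (column p X \<bullet> (\<Sigma> *v column p X))"
  let ?r = "\<lambda>i. \<gamma> i * (row i X \<bullet> (\<Sigma> *v row i X))"
  have nonneg: "0 \<le> ?c p" "0 \<le> ?r p" for p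
    using risk_aversion_pos[of p] quadratic_form_nonneg by simp_all
  have "sum ?c UNIV + sum ?r UNIV = 0"
    using inner_vecm_sylvester[of X] \<open>sylvester X = 0\<close> by (simp add: vecm_linear)
  moreover have "0 \<le> sum ?c UNIV" "0 \<le> sum ?r UNIV"
    using nonneg by (simp_all add: sum_nonneg)
  ultimately have "sum ?c UNIV = 0"
    by linarith
  then have "?c p = 0" for p
    using nonneg by (simp add: sum_nonneg_eq_0_iff)
  then have "column p X = 0" for p
    using positive_definite[of "column p X"] risk_aversion_pos[of p] by (metis mult_eq_0_iff order_less_irrefl)
  then show "X = 0"
    by (simp add: vec_eq_iff column_def)
qed

lemma sylvester_inject: "sylvester X = sylvester Y \<Longrightarrow> X = Y"
proof -
  assume "sylvester X = sylvester Y"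
  moreover have "vecm (sylvester (X - Y)) = vecm (sylvester X) - vecm (sylvester Y)"
    by (simp add: Kmat_vecm[symmetric] vecm_linear matrix_vector_mult_diff_distrib)
  ultimately have "vecm (sylvester (X - Y)) = vecm 0"
    by (simp add: vecm_linear)
  then show "X = Y"
    using sylvester_eq_0D[of "X - Y"] by (simp add: vecm_inject)
qed

lemma Kmat_invertible: "invertible (Kmat \<Sigma> \<gamma>)"
proof -
  have "x = 0" if "Kmat \<Sigma> \<gamma> *v x = 0" for x
  proof -
    have "vecm (sylvester (unvecm x)) = vecm 0"
      using that Kmat_vecm[of "unvecm x"] by (simp add: vecm_linear)
    then have "unvecm x = 0"
      using sylvester_eq_0D by (simp add: vecm_inject)
    then show "x = 0"
      by (metis vecm_unvecm vecm_linear(1))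
  qed
  then show ?thesis
    using invertible_left_inverse matrix_left_invertible_ker by blast
qed

lemma Kmat_matrix_inv: "Kmat \<Sigma> \<gamma> ** matrix_inv (Kmat \<Sigma> \<gamma>) = mat 1"
  using Kmat_invertible someI_ex[of "\<lambda>A'. Kmat \<Sigma> \<gamma> ** A' = mat 1 \<and> A' ** Kmat \<Sigma> \<gamma> = mat 1"]
  unfolding invertible_def matrix_inv_def by auto

definition stable_weights :: "real^'n^'n \<Rightarrow> real^'n^'n" where
  "stable_weights M' = unvecm (matrix_inv (Kmat \<Sigma> \<gamma>) *v ((1/2) *\<^sub>R vecm (M' + transpose M')))"

lemma vecm_stable_weights:
  "vecm (stable_weights M') = matrix_inv (Kmat \<Sigma> \<gamma>) *v ((1/2) *\<^sub>R vecm (M' + transpose M'))"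
  by (simp add: stable_weights_def)

lemma sylvester_stable_weights: "sylvester (stable_weights M') = (1/2) *\<^sub>R (M' + transpose M')"
proof -
  have "vecm (sylvester (stable_weights M')) = vecm ((1/2) *\<^sub>R (M' + transpose M'))"
    by (simp add: Kmat_vecm[symmetric] vecm_stable_weights matrix_vector_mul_assoc Kmat_matrix_inv
        vecm_linear(4))
  then show ?thesis
    unfolding vecm_inject .
qed

lemma stable_weights_symmetric: "transpose (stable_weights M') = stable_weights M'"
proof (rule sylvester_inject)
  show "sylvester (transpose (stable_weights M')) = sylvester (stable_weights M')"
    by (simp add: transpose_sylvester[symmetric] sylvester_stable_weights transpose_scalar
        transpose_add add.commute)
qed

lemma sylvester_of_symmetric:
  assumes "transpose W = W"
  shows "sylvester W = \<Sigma> ** W ** diagm \<gamma> + transpose (\<Sigma> ** W ** diagm \<gamma>)"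
  by (simp add: sylvester_def matrix_transpose_mul assms symmetric matrix_mul_assoc)

lemma stable_point_eq:
  "stable_point \<Sigma> \<gamma> M' = (stable_weights M', M' - 2 *\<^sub>R (\<Sigma> ** stable_weights M' ** diagm \<gamma>))"
  unfolding stable_point_def
proof (rule the_equality; clarify)
  let ?W = "stable_weights M'"
  have "2 *\<^sub>R sylvester ?W = M' + transpose M'"
    by (simp add: sylvester_stable_weights)
  then show "transpose ?W = ?W \<and> transpose (M' - 2 *\<^sub>R (\<Sigma> ** ?W ** diagm \<gamma>)) = - (M' - 2 *\<^sub>R (\<Sigma> ** ?W ** diagm \<gamma>))
      \<and> M' - (M' - 2 *\<^sub>R (\<Sigma> ** ?W ** diagm \<gamma>)) = 2 *\<^sub>R (\<Sigma> ** ?W ** diagm \<gamma>)"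
    by (simp add: stable_weights_symmetric sylvester_of_symmetric transpose_diff transpose_scalar
        algebra_simps)
next
  fix W P
  assume W: "transpose W = W" and P: "transpose P = - P"
    and eq: "M' - P = 2 *\<^sub>R (\<Sigma> ** W ** diagm \<gamma>)"
  let ?A = "\<Sigma> ** W ** diagm \<gamma>"
  have M: "M' = P + 2 *\<^sub>R ?A"
    using eq by (simp add: algebra_simps)
  then have "transpose M' = - P + 2 *\<^sub>R transpose ?A"
    using P by (simp add: transpose_add transpose_scalar)
  with M have "M' + transpose M' = 2 *\<^sub>R sylvester W"
    by (simp add: sylvester_of_symmetric[OF W] scaleR_add_right)
  then have "sylvester W = sylvester (stable_weights M')"
    by (simp add: sylvester_stable_weights)
  then have "W = stable_weights M'"
    by (rule sylvester_inject)
  with eq show "W = stable_weights M' \<and> P = M' - 2 *\<^sub>R (\<Sigma> ** stable_weights M' ** diagm \<gamma>)"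
    by (simp add: algebra_simps)
qed

lemma Lmat_vecm: "Lmat \<Sigma> \<gamma> *v vecm M' = vecm (stable_weights M')"
  by (simp add: vecm_stable_weights Lmat_def scaleR_matrix_vector_assoc[symmetric]
      matrix_vector_mult_add_rdistrib matrix_vector_mul_assoc[symmetric] commut_vecm vecm_linear
      matrix_vector_mult_scaleR matrix_vector_right_distrib)

lemma column_stable_weights:
  "column k (stable_weights M') = (\<Sum>q\<in>UNIV. blk (Lmat \<Sigma> \<gamma>) k q *v column q M')"
  by (simp add: commut_k_vecm[symmetric] Lmat_vecm[symmetric] commut_k_block_expansion)

section \<open>Agent \<open>k\<close>'s expected utility\<close>

lemma yvec_eq: "yvec \<Sigma> \<gamma> M k = gain_matrix \<Sigma> \<gamma> k *v column k (stable_weights M)"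
proof -
  have "column k (stable_weights M) =
      (1/2) *\<^sub>R (commut_k k *v (matrix_inv (Kmat \<Sigma> \<gamma>) *v vecm (M + transpose M)))"
    by (simp add: commut_k_vecm[symmetric] vecm_stable_weights matrix_vector_mult_scaleR)
  then show ?thesis
    by (simp add: yvec_def gain_matrix_def Let_def matrix_vector_mult_scaleR)
qed

lemma column_stable_weights_deviation:
  assumes "k \<in> S"
  shows "column k (stable_weights (M + devmat S k D d \<omega>)) =
    column k (stable_weights M) + (\<Sum>q\<in>S - {k}. blk (Lmat \<Sigma> \<gamma>) k q *v D q \<omega>)
      + blk (Lmat \<Sigma> \<gamma>) k k *v d"
proof -
  let ?L = "blk (Lmat \<Sigma> \<gamma>) k"
  let ?dev = "\<lambda>q. column q (devmat S k D d \<omega>)"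
  have "column k (stable_weights (M + devmat S k D d \<omega>)) = column k (stable_weights M) + (\<Sum>q\<in>UNIV. ?L q *v ?dev q)"
    by (simp add: column_stable_weights column_linear matrix_vector_right_distrib sum.distrib)
  also have "(\<Sum>q\<in>UNIV. ?L q *v ?dev q) = ?L k *v d + (\<Sum>q\<in>UNIV - {k}. ?L q *v ?dev q)"
    by (simp add: sum.remove[of UNIV k] column_devmat)
  also have "(\<Sum>q\<in>UNIV - {k}. ?L q *v ?dev q) = (\<Sum>q\<in>S - {k}. ?L q *v D q \<omega>)"
    by (rule sum.mono_neutral_cong_right) (auto simp: column_devmat)
  finally show ?thesis
    by (simp add: add_ac)
qed

lemma utility_stable_point:
  assumes "column k M' = column k M + d"
  shows "utility \<Sigma> \<gamma> M k (stable_point \<Sigma> \<gamma> M') =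
    \<gamma> k * (column k (stable_weights M') \<bullet> (\<Sigma> *v column k (stable_weights M'))) - column k (stable_weights M') \<bullet> d"
proof -
  let ?w = "column k (stable_weights M')"
  have "column k M - column k (M' - 2 *\<^sub>R (\<Sigma> ** stable_weights M' ** diagm \<gamma>)) = (2 * \<gamma> k) *\<^sub>R (\<Sigma> *v ?w) - d"
    using assms by (simp add: column_linear column_matrix_mul_diagm column_matrix_mul[of _ \<Sigma>])
  then show ?thesis
    unfolding utility_def stable_point_eq Let_def fst_conv snd_conv
    by (simp add: inner_diff_right)
qed

lemma own_cost_nonneg: "0 \<le> x \<bullet> (own_cost \<Sigma> \<gamma> k *v x)"
proof -
  let ?A = "blk (Lmat \<Sigma> \<gamma>) k k"
  let ?q = "\<lambda>p W. \<gamma> p * (column p W \<bullet> (\<Sigma> *v column p W))"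
  define E :: "real^'n^'n" where "E = (\<chi> r i. if i = k then x $ r else 0)"
  define W where "W = stable_weights E"
  have column_E: "column q E = (if q = k then x else 0)" for q
    by (simp add: column_def vec_eq_iff E_def)
  have "column k W = ?A *v x"
    by (simp add: W_def column_stable_weights column_E if_distrib[of "(*v) _"] sum.delta' cong: if_cong)
  have W_sym: "transpose W = W"
    by (simp add: W_def stable_weights_symmetric)
  have "vecm W \<bullet> vecm (transpose E) = vecm W \<bullet> vecm E"
    using inner_vecm_transpose[of W "transpose E"] by (simp add: W_sym)
  then have "vecm W \<bullet> vecm (sylvester W) = vecm W \<bullet> vecm E"
    by (simp add: W_def sylvester_stable_weights vecm_linear inner_add_right)
  also have "\<dots> = column k W \<bullet> x"
    by (simp add: inner_vecm column_E if_distrib[of "inner _"] cong: if_cong)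
  finally have pairing: "column k W \<bullet> x = 2 * sum (\<lambda>p. ?q p W) UNIV"
    using inner_vecm_sylvester[of W] by (simp add: row_transpose[of _ W, symmetric] W_sym)
  have nonneg: "0 \<le> ?q p W" for p
    using risk_aversion_pos[of p] quadratic_form_nonneg by simp
  have "?q k W \<le> sum (\<lambda>p. ?q p W) UNIV"
    by (rule member_le_sum) (simp_all add: nonneg)
  then have "?q k W \<le> column k W \<bullet> x"
    using pairing nonneg[of k] by linarith
  then show ?thesis
    by (simp add: inner_own_cost \<open>column k W = ?A *v x\<close> inner_commute)
qed

lemma expected_utility_quadratic:
  assumes "prob_space \<Omega>" "k \<in> S"
    and integrable: "\<And>j. j \<in> S - {k} \<Longrightarrow> integrable \<Omega> (D j)"
    and square_integrable: "\<And>j. j \<in> S - {k} \<Longrightarrow> integrable \<Omega> (\<lambda>\<omega>. (norm (D j \<omega>))\<^sup>2)"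
  obtains C where "\<And>d. expected_utility \<Omega> \<Sigma> \<gamma> M S k D d =
      C + (gain_matrix \<Sigma> \<gamma> k *v (column k (stable_weights M)
          + (\<Sum>j\<in>S - {k}. blk (Lmat \<Sigma> \<gamma>) k j *v integral\<^sup>L \<Omega> (D j)))) \<bullet> d
        - d \<bullet> (own_cost \<Sigma> \<gamma> k *v d)"
proof -
  interpret prob_space \<Omega>
    by (fact assms(1))
  let ?L = "blk (Lmat \<Sigma> \<gamma>) k"
  define a where "a \<omega> = column k (stable_weights M) + (\<Sum>j\<in>S - {k}. ?L j *v D j \<omega>)" for \<omega>
  define C where "C = (\<integral>\<omega>. \<gamma> k * (a \<omega> \<bullet> (\<Sigma> *v a \<omega>)) \<partial>\<Omega>)"
  have moments: "integrable \<Omega> a" "square_integrable \<Omega> a"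
    "integral\<^sup>L \<Omega> a = column k (stable_weights M) + (\<Sum>j\<in>S - {k}. ?L j *v integral\<^sup>L \<Omega> (D j))"
    unfolding a_def
    using affine_random_vector_moments[where D = D and J = "S - {k}" and L = ?L
        and c = "column k (stable_weights M)", OF integrable square_integrable]
    by simp_all
  have expected_utility: "expected_utility \<Omega> \<Sigma> \<gamma> M S k D d = C + (gain_matrix \<Sigma> \<gamma> k *v integral\<^sup>L \<Omega> a) \<bullet> d
        - d \<bullet> (own_cost \<Sigma> \<gamma> k *v d)" for d
  proof -
    let ?w = "\<lambda>\<omega>. a \<omega> + blk (Lmat \<Sigma> \<gamma>) k k *v d"
    have "utility \<Sigma> \<gamma> M k (stable_point \<Sigma> \<gamma> (M + devmat S k D d \<omega>)) =
        \<gamma> k * (?w \<omega> \<bullet> (\<Sigma> *v ?w \<omega>)) - ?w \<omega> \<bullet> d" for \<omega>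
      using utility_stable_point[of k "M + devmat S k D d \<omega>" M d]
        column_stable_weights_deviation[OF \<open>k \<in> S\<close>, of M D d \<omega>]
      by (simp add: column_linear column_devmat a_def add.assoc)
    then show ?thesis
      by (simp add: expected_utility_def expectation_shifted_quadratic[OF symmetric moments(1,2)] C_def
          inner_gain_matrix[OF symmetric] inner_own_cost inner_commute[of d])
  qed
  show ?thesis
    by (rule that[of C]) (simp add: expected_utility moments(3))
qed

end

theorem mainTheorem6:
  fixes \<Omega> :: "'a measure"
    and \<Sigma> M :: "real^'n^'n::finite"
    and \<gamma> :: "'n \<Rightarrow> real"
    and S :: "'n set" and k :: 'n
    and D :: "'n \<Rightarrow> 'a \<Rightarrow> real^'n"
  assumes "prob_space \<Omega>"
    and "transpose \<Sigma> = \<Sigma>"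
    and "\<And>x. x \<noteq> 0 \<Longrightarrow> x \<bullet> (\<Sigma> *v x) > 0"
    and "\<And>i. \<gamma> i > 0"
    and "k \<in> S"
    and "\<And>j. j \<in> S - {k} \<Longrightarrow> integrable \<Omega> (D j)"
    and "\<And>j. j \<in> S - {k} \<Longrightarrow> integrable \<Omega> (\<lambda>\<omega>. (norm (D j \<omega>))\<^sup>2)"
  shows "(\<forall>d'. expected_utility \<Omega> \<Sigma> \<gamma> M S k D d' \<le> expected_utility \<Omega> \<Sigma> \<gamma> M S k D d)
     \<longleftrightarrow> Tblk \<Sigma> \<gamma> k k *v d + (\<Sum>j\<in>S - {k}. Tblk \<Sigma> \<gamma> k j *v integral\<^sup>L \<Omega> (D j))
           = yvec \<Sigma> \<gamma> M k"
proof -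
  interpret negotiation_model \<Sigma> \<gamma>
    using assms(2-4) by unfold_locales auto
  let ?N = "own_cost \<Sigma> \<gamma> k" and ?G = "gain_matrix \<Sigma> \<gamma> k"
  let ?others = "\<Sum>j\<in>S - {k}. blk (Lmat \<Sigma> \<gamma>) k j *v integral\<^sup>L \<Omega> (D j)"
  obtain C where EU: "\<And>d. expected_utility \<Omega> \<Sigma> \<gamma> M S k D d =
      C + (?G *v (column k (stable_weights M) + ?others)) \<bullet> d - d \<bullet> (?N *v d)"
    using expected_utility_quadratic[where D = D and M = M, OF assms(1,5-7)] by blast
  have "(\<forall>d'. expected_utility \<Omega> \<Sigma> \<gamma> M S k D d' \<le> expected_utility \<Omega> \<Sigma> \<gamma> M S k D d)
      \<longleftrightarrow> (?N + transpose ?N) *v d = ?G *v (column k (stable_weights M) + ?others)"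
    unfolding EU using psd_quadratic_maximum_iff[OF own_cost_nonneg] by simp
  moreover have "(\<Sum>j\<in>S - {k}. Tblk \<Sigma> \<gamma> k j *v integral\<^sup>L \<Omega> (D j)) = - (?G *v ?others)"
    by (simp add: Tblk_off_diag matrix_vector_mult_uminus matrix_vector_mul_sum matrix_vector_mul_assoc
        sum_negf)
  ultimately show ?thesis
    by (simp add: Tblk_diag[OF symmetric] yvec_eq matrix_vector_right_distrib algebra_simps)
qed

end
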